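(* Let $m,n,r$ be positive integers with $n\ge 2$, and let $p$ be a prime with $p>n+1$ and $p\nmid m$. Then \[ S_n^{(m)}(p^{r+1})\equiv (-1)^{m-1}\binom{n-2}{m-1}\,S_n^{(1)}(p^2)\,p^{r-1}\pmod{p^{r+1}}. \]
   Context: For a prime $p$, $\mathcal P_p$ denotes the set of positive integers not divisible by $p$. For positive integers $m,n,r$ with $p\nmid m$, $S_n^{(m)}(p^r):=\sum\frac{1}{l_1\cdots l_n}$, the sum over all $(l_1,\dots,l_n)\in\mathcal P_p^n$ with $l_1,\dots,l_n<p^r$ and $l_1+\dots+l_n=mp^r$. Congruences are between rational numbers whose denominators are prime to $p$: $x\equiv y\pmod{p^k}$ means $x-y\in p^k\mathbb Z_{(p)}$. Binomial coefficients $\binom{n-2}{m-1}$ are $0$ when $m-1>n-2$. *)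

theory Defs
  imports Complex_Main "HOL-Library.FuncSet" "HOL-Computational_Algebra.Primes"
begin

text \<open>The n-tuples (l_1,...,l_n) are represented as functions on the index set {0..<n}
(extensional, via PiE).\<close>

definition S_tuples :: "nat \<Rightarrow> nat \<Rightarrow> nat \<Rightarrow> nat \<Rightarrow> (nat \<Rightarrow> nat) set" where
  "S_tuples p n m r =
     {l \<in> {0..<n} \<rightarrow>\<^sub>E {k. 0 < k \<and> k < p ^ r \<and> \<not> p dvd k}.
        (\<Sum>i<n. l i) = m * p ^ r}"

definition S :: "nat \<Rightarrow> nat \<Rightarrow> nat \<Rightarrow> nat \<Rightarrow> rat" where
  "S p n m r = (\<Sum>l\<in>S_tuples p n m r. 1 / (\<Prod>i<n. of_nat (l i)))"

text \<open>Congruence modulo p^k in Z_(p): x - y = p^k * a / b with integers a, b, p not dividing b.\<close>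
definition qcong :: "nat \<Rightarrow> nat \<Rightarrow> rat \<Rightarrow> rat \<Rightarrow> bool" where
  "qcong p k x y \<longleftrightarrow>
     (\<exists>a b :: int. \<not> int p dvd b \<and> x - y = of_int (int p ^ k * a) / of_int b)"

end

theory Submission
  imports Defs "HOL-Number_Theory.Cong" "HOL-Combinatorics.Transposition"
begin

text \<open>
  Write each entry \<open>l_i < p^(k+1)\<close> as \<open>x_i + p^k y_i\<close> with \<open>0 < x_i < p^k\<close> prime to \<open>p\<close> and
  \<open>0 \<le> y_i < p\<close>; then \<open>\<Sum> x_i = j p^k\<close> with \<open>1 \<le> j < n\<close> and \<open>\<Sum> y_i = m p - j\<close>. Modulo \<open>p^(2k)\<close>,
  \<open>1 / \<Prod>(x_i + p^k y_i) \<equiv> (1 / \<Prod> x_i) (1 - p^k \<Sum> y_i / x_i)\<close>. Let \<open>N_j(m)\<close> be the number of digit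
  vectors \<open>y\<close> with \<open>\<Sum> y_i = m p - j\<close>. By symmetry each coordinate sums to \<open>N_j(m) (m p - j) / n\<close>
  over these vectors, so once \<open>p\<close> divides \<open>N_j(m)\<close> the correction term vanishes modulo \<open>p^(k+1)\<close>
  and \<open>S_n^(m)(p^(k+1)) \<equiv> \<Sum>_j N_j(m) S_n^(j)(p^k)\<close>.

  Inclusion-exclusion writes \<open>(n-1)! N_j(m)\<close> as an alternating sum of products \<open>\<Prod>_{1 \<le> u < n} (s + u)\<close>
  at \<open>s = (m - k) p - j\<close>, each containing the factor \<open>(m - k) p\<close>. Hence
  \<open>(n-1)! N_j(m) \<equiv> p \<phi>(j) \<gamma>(m) (mod p^2)\<close>, where \<open>\<gamma>(m) = (-1)^(m-1) C(n-2, m-1)\<close>,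
  \<open>\<phi>(j) = \<Prod>_{u \<noteq> j} (u - j)\<close> and \<open>\<phi>(j) \<gamma>(j) = (n-2)!\<close>. Since \<open>p > n - 1\<close>, this gives \<open>p | N_j(m)\<close>,
  \<open>N_j(m) \<equiv> \<gamma>(m) N_j(1)\<close> and \<open>\<Sum>_j \<gamma>(j) N_j(m) \<equiv> p \<gamma>(m)\<close> modulo \<open>p^2\<close>: the first two settle
  \<open>r = 1\<close>, the last one the step from \<open>r\<close> to \<open>r + 1\<close>.
\<close>

section \<open>\<open>p\<close>-integral rationals\<close>

definition p_integral :: "nat \<Rightarrow> rat \<Rightarrow> bool" where
  "p_integral p x \<longleftrightarrow> (\<exists>a b :: int. \<not> int p dvd b \<and> x = of_int a / of_int b)"

lemma p_integral_of_int [simp]: "prime p \<Longrightarrow> p_integral p (of_int a)"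
  unfolding p_integral_def by (rule exI[of _ a], rule exI[of _ 1]) (auto simp: prime_gt_1_nat)

lemma p_integral_of_nat [simp]: "prime p \<Longrightarrow> p_integral p (of_nat a)"
  using p_integral_of_int[of p "int a"] by simp

lemma p_integral_0 [simp]: "prime p \<Longrightarrow> p_integral p 0"
  and p_integral_1 [simp]: "prime p \<Longrightarrow> p_integral p 1"
  using p_integral_of_int[of p 0] p_integral_of_int[of p 1] by simp_all

lemma p_integral_of_nat_divide: "\<not> p dvd u \<Longrightarrow> p_integral p (of_nat v / of_nat u)"
  unfolding p_integral_def by (rule exI[of _ "int v"], rule exI[of _ "int u"]) simp

lemma p_integral_inverse_of_nat: "\<not> p dvd u \<Longrightarrow> p_integral p (1 / of_nat u)"
  using p_integral_of_nat_divide[of p u 1] by simp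

lemma p_integral_add [intro]:
  assumes "prime p" "p_integral p x" "p_integral p y" shows "p_integral p (x + y)"
proof -
  obtain a b c d :: int where ab: "\<not> int p dvd b" "x = of_int a / of_int b"
    and cd: "\<not> int p dvd d" "y = of_int c / of_int d"
    using assms unfolding p_integral_def by blast
  have "\<not> int p dvd b * d" using ab cd \<open>prime p\<close> by (simp add: prime_dvd_mult_iff)
  moreover have "b \<noteq> 0" "d \<noteq> 0" using ab cd by auto
  then have "x + y = of_int (a * d + c * b) / of_int (b * d)" using ab cd by (simp add: field_simps)
  ultimately show ?thesis unfolding p_integral_def by blast
qed

lemma p_integral_mult [intro]:
  assumes "prime p" "p_integral p x" "p_integral p y" shows "p_integral p (x * y)"
proof -
  obtain a b c d :: int where ab: "\<not> int p dvd b" "x = of_int a / of_int b"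
    and cd: "\<not> int p dvd d" "y = of_int c / of_int d"
    using assms unfolding p_integral_def by blast
  have "\<not> int p dvd b * d" using ab cd \<open>prime p\<close> by (simp add: prime_dvd_mult_iff)
  moreover have "x * y = of_int (a * c) / of_int (b * d)" using ab cd by simp
  ultimately show ?thesis unfolding p_integral_def by blast
qed

lemma p_integral_uminus [intro]: "p_integral p x \<Longrightarrow> p_integral p (- x)"
  unfolding p_integral_def by (metis minus_divide_left of_int_minus)

lemma p_integral_diff [intro]: "prime p \<Longrightarrow> p_integral p x \<Longrightarrow> p_integral p y \<Longrightarrow> p_integral p (x - y)"
  using p_integral_add[of p x "- y"] by auto

lemma p_integral_sum [intro]:
  "prime p \<Longrightarrow> (\<And>i. i \<in> A \<Longrightarrow> p_integral p (f i)) \<Longrightarrow> p_integral p (\<Sum>i\<in>A. f i)"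
  by (induct A rule: infinite_finite_induct) auto

lemma p_integral_prod [intro]:
  "prime p \<Longrightarrow> (\<And>i. i \<in> A \<Longrightarrow> p_integral p (f i)) \<Longrightarrow> p_integral p (\<Prod>i\<in>A. f i)"
  by (induct A rule: infinite_finite_induct) auto

lemma p_integral_power [intro]: "prime p \<Longrightarrow> p_integral p x \<Longrightarrow> p_integral p (x ^ k)"
  by (induct k) auto

lemma p_integral_inverse_prod:
  assumes "prime p" "\<And>i. i \<in> A \<Longrightarrow> \<not> p dvd x i"
  shows "p_integral p (1 / (\<Prod>i\<in>A. of_nat (x i)))"
  using assms p_integral_prod[of p A "\<lambda>i. 1 / of_nat (x i)"]
  by (simp add: prod_dividef p_integral_inverse_of_nat)

lemma qcong_iff: "qcong p k x y \<longleftrightarrow> (\<exists>z. p_integral p z \<and> x - y = of_nat p ^ k * z)"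
proof
  assume "qcong p k x y"
  then obtain a b :: int where "\<not> int p dvd b" "x - y = of_int (int p ^ k * a) / of_int b"
    unfolding qcong_def by blast
  then show "\<exists>z. p_integral p z \<and> x - y = of_nat p ^ k * z"
    unfolding p_integral_def by (intro exI[of _ "of_int a / of_int b"]) auto
next
  assume "\<exists>z. p_integral p z \<and> x - y = of_nat p ^ k * z"
  then obtain a b :: int where "\<not> int p dvd b" "x - y = of_nat p ^ k * (of_int a / of_int b)"
    unfolding p_integral_def by blast
  then show "qcong p k x y" unfolding qcong_def by (intro exI[of _ a] exI[of _ b]) simp
qed

lemma qcongI: "p_integral p z \<Longrightarrow> x - y = of_nat p ^ k * z \<Longrightarrow> qcong p k x y"
  using qcong_iff by blast

lemma qcongE:
  assumes "qcong p k x y"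
  obtains z where "p_integral p z" "x - y = of_nat p ^ k * z"
  using assms qcong_iff by blast

lemma qcong_refl [simp]: "prime p \<Longrightarrow> qcong p k x x"
  by (rule qcongI[of p 0]) auto

lemma qcong_sym: "qcong p k x y \<Longrightarrow> qcong p k y x"
  unfolding qcong_iff by (metis minus_diff_eq mult_minus_right p_integral_uminus)

lemma qcong_trans:
  assumes "prime p" "qcong p k x y" "qcong p k y z" shows "qcong p k x z"
proof -
  obtain u v where "p_integral p u" "x - y = of_nat p ^ k * u" "p_integral p v" "y - z = of_nat p ^ k * v"
    using assms by (meson qcongE)
  then show ?thesis using assms(1) by (intro qcongI[of p "u + v"]) (auto simp: algebra_simps)
qed

lemma qcong_add:
  assumes "prime p" "qcong p k a b" "qcong p k c d" shows "qcong p k (a + c) (b + d)"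
proof -
  obtain u v where "p_integral p u" "a - b = of_nat p ^ k * u" "p_integral p v" "c - d = of_nat p ^ k * v"
    using assms by (meson qcongE)
  then show ?thesis using assms(1) by (intro qcongI[of p "u + v"]) (auto simp: algebra_simps)
qed

lemma qcong_sum:
  assumes "prime p" "\<And>i. i \<in> A \<Longrightarrow> qcong p k (f i) (g i)"
  shows "qcong p k (\<Sum>i\<in>A. f i) (\<Sum>i\<in>A. g i)"
  using assms(2) by (induct A rule: infinite_finite_induct) (auto intro: qcong_add[OF assms(1)] simp: assms(1))

lemma qcong_mult_left:
  assumes "prime p" "qcong p k a b" "p_integral p c" shows "qcong p k (c * a) (c * b)"
proof -
  obtain u where "p_integral p u" "a - b = of_nat p ^ k * u" using assms by (meson qcongE)
  then show ?thesis using assms by (intro qcongI[of p "c * u"]) (auto simp: algebra_simps)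
qed

lemma qcong_mult:
  assumes "prime p" "qcong p k a b" "qcong p k c d" "p_integral p a" "p_integral p d"
  shows "qcong p k (a * c) (b * d)"
  using qcong_trans[OF assms(1) qcong_mult_left[OF assms(1,3,4)]]
    qcong_mult_left[OF assms(1,2,5)] by (simp add: mult.commute)

lemma qcong_prod:
  assumes "prime p" "\<And>i. i \<in> A \<Longrightarrow> qcong p k (f i) (g i)"
    "\<And>i. i \<in> A \<Longrightarrow> p_integral p (f i)" "\<And>i. i \<in> A \<Longrightarrow> p_integral p (g i)"
  shows "qcong p k (\<Prod>i\<in>A. f i) (\<Prod>i\<in>A. g i)"
  using assms(2-)
proof (induct A rule: infinite_finite_induct)
  case (insert x F)
  then show ?case using assms(1) by simp (rule qcong_mult, auto)
qed (auto simp: assms(1))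

lemma qcong_mono:
  assumes "prime p" "qcong p k a b" "j \<le> k" shows "qcong p j a b"
proof -
  obtain u where "p_integral p u" "a - b = of_nat p ^ k * u" using assms by (meson qcongE)
  moreover have "(of_nat p ^ k :: rat) = of_nat p ^ j * of_nat p ^ (k - j)"
    using assms(3) by (simp flip: power_add)
  ultimately show ?thesis using assms(1)
    by (intro qcongI[of p "of_nat p ^ (k - j) * u"]) (auto intro!: p_integral_mult p_integral_power)
qed

lemma qcong_of_int:
  assumes "prime p" "[a = b] (mod int p ^ k)" shows "qcong p k (of_int a) (of_int b)"
proof -
  obtain c where "a - b = int p ^ k * c" using assms(2) by (metis cong_iff_dvd_diff dvdE)
  then have "of_int a - of_int b = of_nat p ^ k * (of_int c :: rat)"
    by (metis of_int_diff of_int_mult of_int_of_nat_eq of_int_power)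
  then show ?thesis using assms(1) by (intro qcongI[of p "of_int c"]) auto
qed

lemma qcong_mult_prime_power:
  assumes "qcong p k a b" shows "qcong p (k + j) (of_nat p ^ j * a) (of_nat p ^ j * b)"
proof -
  obtain u where "p_integral p u" "a - b = of_nat p ^ k * u" using assms by (meson qcongE)
  then show ?thesis by (intro qcongI[of p u]) (auto simp: algebra_simps power_add)
qed

lemma qcong_mult_of_int_multiple:
  assumes "prime p" "int p dvd c" "qcong p k a b"
  shows "qcong p (k + 1) (of_int c * a) (of_int c * b)"
proof -
  obtain d where d: "c = int p * d" using assms(2) by (elim dvdE)
  obtain u where "p_integral p u" "a - b = of_nat p ^ k * u" using assms(3) by (meson qcongE)
  then show ?thesis using assms(1) d
    by (intro qcongI[of p "of_int d * u"]) (auto simp: algebra_simps)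
qed

section \<open>Counting digit vectors with a given sum\<close>

definition digit_tuples :: "nat \<Rightarrow> nat \<Rightarrow> int \<Rightarrow> (nat \<Rightarrow> nat) set" where
  "digit_tuples p n t = {y \<in> {0..<n} \<rightarrow>\<^sub>E {0..<p}. int (\<Sum>i<n. y i) = t}"

lemma finite_digit_tuples [simp]: "finite (digit_tuples p n t)"
  unfolding digit_tuples_def
  by (rule finite_subset[of _ "{0..<n} \<rightarrow>\<^sub>E {0..<p}"]) (auto intro: finite_PiE)

lemma card_digit_tuples_0: "card (digit_tuples p 0 t) = (if t = 0 then 1 else 0)"
proof -
  have "digit_tuples p 0 t = (if t = 0 then {\<lambda>_. undefined} else {})"
    unfolding digit_tuples_def by auto
  then show ?thesis by simp
qed

lemma card_digit_tuples_Suc: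
  "card (digit_tuples p (Suc n) t) = (\<Sum>a<p. card (digit_tuples p n (t - int a)))"
proof -
  let ?A = "SIGMA a:{..<p}. digit_tuples p n (t - int a)"
  have "bij_betw (\<lambda>(a, y). y(n := a)) ?A (digit_tuples p (Suc n) t)"
  proof (rule bij_betw_byWitness[where f'="\<lambda>l. (l n, l(n := undefined))"])
    show "\<forall>z\<in>?A. (\<lambda>l. (l n, l(n := undefined))) ((\<lambda>(a, y). y(n := a)) z) = z"
      by (auto simp: digit_tuples_def PiE_def extensional_def fun_upd_idem)
    show "\<forall>l\<in>digit_tuples p (Suc n) t. (\<lambda>(a, y). y(n := a)) (l n, l(n := undefined)) = l"
      by auto
    have sum_upd: "(\<Sum>i<n. (y(n := a)) i) = (\<Sum>i<n. y i)" for y :: "nat \<Rightarrow> nat" and a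
      by (rule sum.cong) auto
    show "(\<lambda>(a, y). y(n := a)) ` ?A \<subseteq> digit_tuples p (Suc n) t"
      by (auto simp: digit_tuples_def PiE_def extensional_def Pi_def sum_upd)
    show "(\<lambda>l. (l n, l(n := undefined))) ` digit_tuples p (Suc n) t \<subseteq> ?A"
      by (auto simp: digit_tuples_def PiE_def extensional_def Pi_def sum_upd)
  qed
  then show ?thesis by (simp add: bij_betw_same_card[symmetric])
qed

definition stars_bars :: "nat \<Rightarrow> int \<Rightarrow> int" where
  "stars_bars d s = (if s < 0 then 0 else int ((nat s + d) choose d))"

lemma stars_bars_diff: "stars_bars (Suc d) s - stars_bars (Suc d) (s - 1) = stars_bars d s"
proof (cases "s \<le> 0")
  case True
  then show ?thesis by (cases "s = 0") (auto simp: stars_bars_def)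
next
  case False
  then have "nat s = Suc (nat (s - 1))" by simp
  then show ?thesis using False by (simp add: stars_bars_def)
qed

lemma sum_stars_bars_window:
  "(\<Sum>a<p. stars_bars d (s - int a)) = stars_bars (Suc d) s - stars_bars (Suc d) (s - int p)"
proof -
  have "stars_bars d (s - int a) = stars_bars (Suc d) (s - int a) - stars_bars (Suc d) (s - int (Suc a))" for a
    using stars_bars_diff[of d "s - int a"] by (simp add: diff_diff_add add.commute)
  then have "(\<Sum>a<p. stars_bars d (s - int a)) =
      (\<Sum>a<p. stars_bars (Suc d) (s - int a) - stars_bars (Suc d) (s - int (Suc a)))"
    by simp
  also have "\<dots> = stars_bars (Suc d) s - stars_bars (Suc d) (s - int p)"
    by (subst sum_lessThan_telescope') simp
  finally show ?thesis .
qed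

lemma sum_alternating_binomial_diff:
  fixes G :: "nat \<Rightarrow> int"
  shows "(\<Sum>k\<le>N. (-1)^k * int (N choose k) * (G k - G (Suc k))) =
         (\<Sum>k\<le>Suc N. (-1)^k * int (Suc N choose k) * G k)"
proof -
  have shifted: "(\<Sum>k\<le>Suc N. (-1)^k * int (Suc N choose k) * G k) =
      G 0 + (\<Sum>k\<le>N. (-1)^(Suc k) * int (N choose k) * G (Suc k))
          + (\<Sum>k\<le>N. (-1)^(Suc k) * int (N choose Suc k) * G (Suc k))"
    by (subst sum.atMost_Suc_shift) (simp add: sum.distrib[symmetric] algebra_simps)
  have unshifted: "G 0 + (\<Sum>k\<le>N. (-1)^(Suc k) * int (N choose Suc k) * G (Suc k))
      = (\<Sum>k\<le>N. (-1)^k * int (N choose k) * G k)"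
    using sum.atMost_Suc_shift[of "\<lambda>k. (-1)^k * int (N choose k) * G k" N]
    by (simp add: sum_negf binomial_eq_0)
  have "(\<Sum>k\<le>Suc N. (-1)^k * int (Suc N choose k) * G k) =
      (\<Sum>k\<le>N. (-1)^k * int (N choose k) * G k) + (\<Sum>k\<le>N. (-1)^(Suc k) * int (N choose k) * G (Suc k))"
    using shifted unshifted by linarith
  then show ?thesis by (simp add: sum.distrib[symmetric] algebra_simps)
qed

lemma digit_tuples_comp_transpose:
  assumes "i < n" "i' < n" "y \<in> digit_tuples p n t"
  shows "y \<circ> Transposition.transpose i i' \<in> digit_tuples p n t"
proof -
  let ?\<sigma> = "Transposition.transpose i i'"
  have "(\<Sum>z<n. y (?\<sigma> z)) = (\<Sum>z<n. y z)"
    using assms(1,2) by (intro sum.reindex_bij_witness[where i="?\<sigma>" and j="?\<sigma>"]) (auto simp: transpose_def)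
  moreover have "?\<sigma> z \<in> {0..<n} \<longleftrightarrow> z \<in> {0..<n}" "z \<notin> {0..<n} \<Longrightarrow> ?\<sigma> z = z" for z
    using assms(1,2) by (auto simp: transpose_def)
  ultimately show ?thesis
    using assms(3) by (auto simp: digit_tuples_def PiE_def Pi_def extensional_def simp flip: of_nat_sum)
qed

lemma sum_digit_tuples_coordinate:
  assumes "i < n"
  shows "n * (\<Sum>y\<in>digit_tuples p n t. y i) = card (digit_tuples p n t) * nat t"
proof -
  let ?D = "digit_tuples p n t"
  have same: "(\<Sum>y\<in>?D. y i') = (\<Sum>y\<in>?D. y i)" if "i' < n" for i'
    using that assms digit_tuples_comp_transpose[of _ n]
    by (intro sum.reindex_bij_witness[where i="\<lambda>y. y \<circ> Transposition.transpose i i'"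
          and j="\<lambda>y. y \<circ> Transposition.transpose i i'"]) (auto simp: fun_eq_iff)
  have "n * (\<Sum>y\<in>?D. y i) = (\<Sum>i'<n. \<Sum>y\<in>?D. y i')" by (simp add: same)
  also have "\<dots> = (\<Sum>y\<in>?D. \<Sum>i'<n. y i')" by (rule sum.swap)
  also have "\<dots> = (\<Sum>y\<in>?D. nat t)" by (intro sum.cong refl) (auto simp: digit_tuples_def simp flip: of_nat_sum)
  finally show ?thesis by simp
qed

text \<open>Inclusion-exclusion over the set of digits forced to be \<open>\<ge> p\<close>.\<close>
lemma card_digit_tuples_formula:
  "int (card (digit_tuples p (Suc d) t)) =
     (\<Sum>k\<le>Suc d. (-1)^k * int (Suc d choose k) * stars_bars d (t - int k * int p))"
proof (induction d arbitrary: t)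
  case 0
  have "int (card (digit_tuples p 1 t)) = (\<Sum>a<p. if t = int a then 1 else 0)"
    by (auto simp: card_digit_tuples_Suc card_digit_tuples_0 intro!: sum.cong)
  also have "\<dots> = (if 0 \<le> t \<and> t < int p then 1 else 0)"
  proof (cases "0 \<le> t \<and> t < int p")
    case True
    then have "(\<Sum>a<p. if t = int a then 1 else 0 :: int) = (\<Sum>a<p. if a = nat t then 1 else 0)"
      by (intro sum.cong) auto
    then show ?thesis using True by (simp add: nat_less_iff)
  qed (auto intro: sum.neutral)
  also have "\<dots> = (\<Sum>k\<le>1. (-1)^k * int (1 choose k) * stars_bars 0 (t - int k * int p))"
    by (simp add: stars_bars_def)
  finally show ?case by simp
next
  case (Suc d)
  have "int (card (digit_tuples p (Suc (Suc d)) t)) =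
      (\<Sum>a<p. \<Sum>k\<le>Suc d. (-1)^k * int (Suc d choose k) * stars_bars d ((t - int k * int p) - int a))"
    unfolding card_digit_tuples_Suc[of p "Suc d"] of_nat_sum Suc.IH by (simp add: algebra_simps)
  also have "\<dots> = (\<Sum>k\<le>Suc d. (-1)^k * int (Suc d choose k) *
      (\<Sum>a<p. stars_bars d ((t - int k * int p) - int a)))"
    by (subst sum.swap) (simp add: sum_distrib_left mult.assoc)
  also have "\<dots> = (\<Sum>k\<le>Suc d. (-1)^k * int (Suc d choose k) *
      (stars_bars (Suc d) (t - int k * int p) - stars_bars (Suc d) (t - int (Suc k) * int p)))"
  proof (intro sum.cong refl)
    fix k
    have "t - int (Suc k) * int p = (t - int k * int p) - int p" by (simp add: algebra_simps)
    then show "(-1)^k * int (Suc d choose k) * (\<Sum>a<p. stars_bars d ((t - int k * int p) - int a)) =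
        (-1)^k * int (Suc d choose k) *
          (stars_bars (Suc d) (t - int k * int p) - stars_bars (Suc d) (t - int (Suc k) * int p))"
      by (simp only: sum_stars_bars_window)
  qed
  also have "\<dots> = (\<Sum>k\<le>Suc (Suc d). (-1)^k * int (Suc (Suc d) choose k) *
      stars_bars (Suc d) (t - int k * int p))"
    by (rule sum_alternating_binomial_diff)
  finally show ?case .
qed

lemma fact_mult_stars_bars:
  assumes "0 \<le> s" shows "fact d * stars_bars d s = (\<Prod>u\<in>{1..d}. s + int u)"
proof (induction d)
  case 0
  then show ?case using assms by (simp add: stars_bars_def)
next
  case (Suc d)
  have "fact (Suc d) * stars_bars (Suc d) s = fact d * int (Suc d * (Suc (nat s + d) choose Suc d))"
    using assms by (simp add: stars_bars_def algebra_simps)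
  also have "\<dots> = fact d * stars_bars d s * (s + int (Suc d))"
    using assms unfolding Suc_times_binomial by (simp add: stars_bars_def algebra_simps)
  finally show ?case using Suc.IH by simp
qed

definition punctured_prod :: "nat \<Rightarrow> nat \<Rightarrow> int" where
  "punctured_prod d j = (\<Prod>u\<in>{1..d}-{j}. int u - int j)"

text \<open>The factor \<open>s + j = M p\<close> of \<open>\<Prod>u\<in>{1..d}. s + u\<close> already supplies one power of \<open>p\<close>,
  so the remaining factors only matter modulo \<open>p\<close>.\<close>
lemma fact_mult_stars_bars_cong:
  assumes "1 \<le> M" "1 \<le> j" "j \<le> d" "d \<le> p"
  shows "[fact d * stars_bars d (int M * int p - int j) = int M * int p * punctured_prod d j]
           (mod int p ^ 2)"
proof -
  let ?s = "int M * int p - int j"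
  have "int p \<le> int M * int p" using assms(1) by (simp add: mult_le_cancel_right1)
  then have "0 \<le> ?s" using assms(3,4) by linarith
  then have "fact d * stars_bars d ?s = int M * int p * (\<Prod>u\<in>{1..d}-{j}. ?s + int u)"
    using assms by (simp add: fact_mult_stars_bars prod.remove[of _ j])
  moreover have "[(\<Prod>u\<in>{1..d}-{j}. ?s + int u) = punctured_prod d j] (mod int p)"
    unfolding punctured_prod_def
    by (intro cong_prod) (simp add: cong_iff_dvd_diff algebra_simps)
  then have "int p * int p dvd int M * int p * ((\<Prod>u\<in>{1..d}-{j}. ?s + int u) - punctured_prod d j)"
    unfolding cong_iff_dvd_diff by (intro mult_dvd_mono) auto
  ultimately show ?thesis
    by (simp add: cong_iff_dvd_diff power2_eq_square right_diff_distrib)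
qed

lemma sum_alternating_binomial:
  assumes "1 \<le> n"
  shows "(\<Sum>k\<le>m. (-1)^k * int (n choose k)) = (-1)^m * int ((n - 1) choose m)"
proof (induction m)
  case (Suc m)
  obtain n' where "n = Suc n'" using assms by (cases n) auto
  then show ?case using Suc.IH by (simp add: algebra_simps)
qed simp

lemma sum_alternating_binomial_weighted:
  assumes "2 \<le> n"
  shows "(\<Sum>k\<le>m. (-1)^k * int (n choose k) * int (Suc m - k)) = (-1)^m * int ((n - 2) choose m)"
proof (induction m)
  case (Suc m)
  obtain n' where n: "n = Suc (Suc n')" using assms by (metis add_2_eq_Suc le_Suc_ex)
  have "(\<Sum>k\<le>Suc m. (-1)^k * int (n choose k) * int (Suc (Suc m) - k)) =
      (\<Sum>k\<le>Suc m. (-1)^k * int (n choose k) * int (Suc m - k)) + (\<Sum>k\<le>Suc m. (-1)^k * int (n choose k))"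
    by (subst sum.distrib[symmetric], intro sum.cong) (auto simp: Suc_diff_le algebra_simps)
  also have "(\<Sum>k\<le>Suc m. (-1)^k * int (n choose k) * int (Suc m - k)) =
      (\<Sum>k\<le>m. (-1)^k * int (n choose k) * int (Suc m - k))"
    by simp
  also have "\<dots> + (\<Sum>k\<le>Suc m. (-1)^k * int (n choose k)) =
      (-1)^m * int (n' choose m) + (-1)^Suc m * int (Suc n' choose Suc m)"
    using Suc.IH n by (simp only: sum_alternating_binomial) simp
  also have "\<dots> = (-1)^Suc m * int ((n - 2) choose Suc m)"
    using n by (simp add: algebra_simps)
  finally show ?case .
qed simp

definition sign_binom :: "nat \<Rightarrow> nat \<Rightarrow> int" where
  "sign_binom n m = (-1)^(m - 1) * int ((n - 2) choose (m - 1))"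

text \<open>Here \<open>m - k\<close> is truncated subtraction, i.e. the positive part of \<open>m - k\<close>.\<close>
lemma sum_alternating_binomial_positive_part:
  assumes "2 \<le> n" "1 \<le> m"
  shows "(\<Sum>k\<le>n. (-1)^k * int (n choose k) * int (m - k)) = sign_binom n m"
proof -
  obtain m' where m: "m = Suc m'" using assms by (cases m) auto
  have "(\<Sum>k\<le>n. (-1)^k * int (n choose k) * int (m - k)) =
      (\<Sum>k\<le>n + m. (-1)^k * int (n choose k) * int (m - k))"
    by (rule sum.mono_neutral_left) auto
  also have "\<dots> = (\<Sum>k\<le>m'. (-1)^k * int (n choose k) * int (m - k))"
    using m by (intro sum.mono_neutral_right) auto
  finally show ?thesis
    using sum_alternating_binomial_weighted[OF assms(1)] m by (simp add: sign_binom_def)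
qed

lemma fact_mult_card_digit_tuples_cong:
  assumes "2 \<le> n" "n \<le> Suc p" "1 \<le> m" "1 \<le> j" "j < n"
  shows "[fact (n - 1) * int (card (digit_tuples p n (int m * int p - int j))) =
          int p * punctured_prod (n - 1) j * sign_binom n m] (mod int p ^ 2)"
proof -
  define d where "d = n - 1"
  have n: "n = Suc d" using assms(1) unfolding d_def by simp
  have term_cong: "[fact d * stars_bars d (int m * int p - int j - int k * int p) =
      int p * punctured_prod d j * int (m - k)] (mod int p ^ 2)" for k
  proof (cases "k < m")
    case True
    then have "int m * int p - int j - int k * int p = int (m - k) * int p - int j"
      by (simp add: algebra_simps of_nat_diff)
    then show ?thesis
      using fact_mult_stars_bars_cong[of "m - k" j d p] True assms n by (simp add: algebra_simps)
  next
    case False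
    then have "int m * int p \<le> int k * int p" by (simp add: mult_right_mono)
    then have "int m * int p - int j - int k * int p < 0" using assms(4) by linarith
    then show ?thesis using False by (simp add: stars_bars_def)
  qed
  have "fact d * int (card (digit_tuples p n (int m * int p - int j))) =
      (\<Sum>k\<le>n. (-1)^k * int (n choose k) * (fact d * stars_bars d (int m * int p - int j - int k * int p)))"
    unfolding n card_digit_tuples_formula by (simp add: sum_distrib_left algebra_simps)
  also have "[\<dots> = (\<Sum>k\<le>n. (-1)^k * int (n choose k) * (int p * punctured_prod d j * int (m - k)))]
      (mod int p ^ 2)"
    by (intro cong_sum cong_scalar_left term_cong)
  also have "(\<Sum>k\<le>n. (-1)^k * int (n choose k) * (int p * punctured_prod d j * int (m - k))) =
      int p * punctured_prod d j * sign_binom n m"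
    unfolding sum_alternating_binomial_positive_part[OF assms(1,3), symmetric]
    by (simp add: sum_distrib_left mult_ac)
  finally show ?thesis unfolding d_def .
qed

lemma punctured_prod_eq:
  assumes "1 \<le> j" "j \<le> d"
  shows "punctured_prod d j = (-1)^(j - 1) * fact (j - 1) * fact (d - j)"
proof -
  have split: "{1..d} - {j} = {1..<j} \<union> {j<..d}" using assms by auto
  have "punctured_prod d j = (\<Prod>u\<in>{1..<j}. int u - int j) * (\<Prod>u\<in>{j<..d}. int u - int j)"
    unfolding punctured_prod_def split by (rule prod.union_disjoint) auto
  also have "(\<Prod>u\<in>{1..<j}. int u - int j) = (\<Prod>v\<in>{1..j - 1}. - int v)"
    by (rule prod.reindex_bij_witness[where i="\<lambda>v. j - v" and j="\<lambda>u. j - u"]) auto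
  also have "\<dots> = (-1)^(j - 1) * fact (j - 1)" by (simp add: prod_uminus fact_prod)
  also have "(\<Prod>u\<in>{j<..d}. int u - int j) = (\<Prod>v\<in>{1..d - j}. int v)"
    by (rule prod.reindex_bij_witness[where i="\<lambda>v. v + j" and j="\<lambda>u. u - j"]) (use assms in auto)
  also have "\<dots> = fact (d - j)" by (simp add: fact_prod)
  finally show ?thesis .
qed

lemma sign_binom_mult_punctured_prod:
  assumes "1 \<le> j" "j < n"
  shows "sign_binom n j * punctured_prod (n - 1) j = fact (n - 2)"
proof -
  have "fact (j - 1) * fact (n - 1 - j) * ((n - 2) choose (j - 1)) = (fact (n - 2) :: nat)"
    using binomial_fact_lemma[of "j - 1" "n - 2"] assms by (simp add: Suc_diff_le)
  then have "fact (j - 1) * fact (n - 1 - j) * int ((n - 2) choose (j - 1)) = fact (n - 2)"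
    by (metis of_nat_fact of_nat_mult)
  moreover have "(-1::int)^(j - 1) * (-1)^(j - 1) = 1" by (simp flip: power_add)
  ultimately show ?thesis using assms
    by (simp add: sign_binom_def punctured_prod_eq algebra_simps)
qed

lemma coprime_fact_prime_power:
  assumes "prime p" "d < p" shows "coprime (fact d) (int p ^ k)"
proof -
  have "\<not> int p dvd fact d"
    using prime_dvd_fact_iff[OF assms(1)] assms(2) by (metis int_dvd_int_iff not_le of_nat_fact)
  then have "coprime (fact d) (int p)"
    using assms(1) by (metis prime_imp_coprime prime_nat_int_transfer coprime_commute)
  then show ?thesis by simp
qed

definition high_digit_count :: "nat \<Rightarrow> nat \<Rightarrow> nat \<Rightarrow> nat \<Rightarrow> int" where
  "high_digit_count p n m j = int (card (digit_tuples p n (int m * int p - int j)))"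

context
  fixes p n :: nat
  assumes p: "prime p" and n: "2 \<le> n" "n < p"
begin

lemma coprime_fact_pred: "coprime (fact (n - 1)) (int p ^ k)"
  using coprime_fact_prime_power[OF p] n by simp

lemma fact_mult_high_digit_count_cong:
  "1 \<le> m \<Longrightarrow> j \<in> {1..<n} \<Longrightarrow>
    [fact (n - 1) * high_digit_count p n m j = int p * punctured_prod (n - 1) j * sign_binom n m]
      (mod int p ^ 2)"
  unfolding high_digit_count_def using n by (intro fact_mult_card_digit_tuples_cong) auto

lemma high_digit_count_dvd:
  assumes "1 \<le> m" "j \<in> {1..<n}" shows "int p dvd high_digit_count p n m j"
proof -
  have "int p dvd fact (n - 1) * high_digit_count p n m j - int p * punctured_prod (n - 1) j * sign_binom n m"
    using fact_mult_high_digit_count_cong[OF assms] unfolding cong_iff_dvd_diff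
    by (rule dvd_trans[rotated]) (simp add: power2_eq_square)
  then have "int p dvd fact (n - 1) * high_digit_count p n m j"
    by (metis dvd_diff_commute dvd_triv_left dvd_add_right_iff diff_add_cancel mult.assoc)
  then show ?thesis
    using coprime_fact_pred[of 1] by (simp add: coprime_dvd_mult_right_iff coprime_commute)
qed

lemma high_digit_count_cong_sign_binom:
  assumes "1 \<le> m" "j \<in> {1..<n}"
  shows "[high_digit_count p n m j = sign_binom n m * high_digit_count p n 1 j] (mod int p ^ 2)"
proof -
  have "[fact (n - 1) * high_digit_count p n m j = sign_binom n m * (int p * punctured_prod (n - 1) j)]
      (mod int p ^ 2)"
    using fact_mult_high_digit_count_cong[OF assms] by (simp add: mult_ac)
  also have "[sign_binom n m * (int p * punctured_prod (n - 1) j) =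
      sign_binom n m * (fact (n - 1) * high_digit_count p n 1 j)] (mod int p ^ 2)"
    using fact_mult_high_digit_count_cong[of 1 j] assms
    by (intro cong_scalar_left) (simp add: sign_binom_def cong_sym)
  also have "sign_binom n m * (fact (n - 1) * high_digit_count p n 1 j) =
      fact (n - 1) * (sign_binom n m * high_digit_count p n 1 j)"
    by (simp add: mult_ac)
  finally show ?thesis
    using coprime_fact_pred[of 2] by (simp add: cong_mult_lcancel)
qed

lemma sum_high_digit_count_sign_binom:
  assumes "1 \<le> m"
  shows "[(\<Sum>j\<in>{1..<n}. high_digit_count p n m j * sign_binom n j) = int p * sign_binom n m]
           (mod int p ^ 2)"
proof -
  have "[fact (n - 1) * (\<Sum>j\<in>{1..<n}. high_digit_count p n m j * sign_binom n j) =
      (\<Sum>j\<in>{1..<n}. int p * punctured_prod (n - 1) j * sign_binom n m * sign_binom n j)] (mod int p ^ 2)"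
    unfolding sum_distrib_left mult.assoc[symmetric]
    by (intro cong_sum cong_scalar_right fact_mult_high_digit_count_cong assms)
  also have "(\<Sum>j\<in>{1..<n}. int p * punctured_prod (n - 1) j * sign_binom n m * sign_binom n j) =
      (\<Sum>j\<in>{1..<n}. int p * sign_binom n m * fact (n - 2))"
    by (intro sum.cong refl) (auto simp: sign_binom_mult_punctured_prod[symmetric] mult_ac)
  also have "\<dots> = fact (n - 1) * (int p * sign_binom n m)"
  proof -
    obtain n' where "n = Suc (Suc n')" using n by (metis add_2_eq_Suc le_Suc_ex)
    then show ?thesis by (simp add: algebra_simps)
  qed
  finally show ?thesis
    using coprime_fact_pred[of 2] by (simp add: cong_mult_lcancel)
qed

end

section \<open>Expanding the reciprocals\<close>

lemma inverse_add_expansion: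
  fixes X E Y :: "'a :: field"
  assumes "X \<noteq> 0" "X + E * Y \<noteq> 0"
  shows "1 / (X + E * Y) - 1 / X * (1 - E * Y / X) = E ^ 2 * (Y ^ 2 * (1 / (X ^ 2 * (X + E * Y))))"
  using assms by (simp add: field_simps power2_eq_square)

lemma inverse_add_prime_power_cong:
  assumes "prime p" "1 \<le> k" "\<not> p dvd x"
  shows "qcong p (2 * k) (1 / of_nat (x + p ^ k * y))
           (1 / of_nat x * (1 - of_nat p ^ k * of_nat y / of_nat x))"
proof (rule qcongI)
  have "\<not> p dvd x + p ^ k * y" using assms by (simp add: dvd_add_left_iff dvd_mult2[OF dvd_power])
  then have "\<not> p dvd x ^ 2 * (x + p ^ k * y)"
    using assms by (simp add: prime_dvd_mult_iff prime_dvd_power_iff)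
  then show "p_integral p (of_nat (y ^ 2) * (1 / of_nat (x ^ 2 * (x + p ^ k * y))))"
    using assms(1) by (intro p_integral_mult p_integral_of_nat p_integral_inverse_of_nat)
  have "0 < x" using assms(3) by (metis dvd_0_right gr0I)
  then have "(of_nat x + of_nat p ^ k * of_nat y :: rat) \<noteq> 0"
    by (metis add_gr_0 of_nat_0_less_iff of_nat_add of_nat_mult of_nat_power less_irrefl)
  with \<open>0 < x\<close> show "1 / of_nat (x + p ^ k * y) - 1 / of_nat x * (1 - of_nat p ^ k * of_nat y / of_nat x) =
      of_nat p ^ (2 * k) * (of_nat (y ^ 2) * (1 / of_nat (x ^ 2 * (x + p ^ k * y))) :: rat)"
    using inverse_add_expansion[of "of_nat x" "of_nat p ^ k" "of_nat y :: rat"]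
    by (simp add: power_mult mult.commute[of 2])
qed

lemma prod_one_minus_cong:
  assumes "prime p" "\<And>i. i \<in> I \<Longrightarrow> p_integral p (a i)"
  shows "qcong p (2 * k) (\<Prod>i\<in>I. 1 - of_nat p ^ k * a i) (1 - of_nat p ^ k * (\<Sum>i\<in>I. a i))"
  using assms(2)
proof (induct I rule: infinite_finite_induct)
  case (insert i F)
  let ?e = "of_nat p ^ k :: rat"
  note qcong_trans[OF assms(1), trans]
  have "qcong p (2 * k) ((1 - ?e * a i) * (\<Prod>i\<in>F. 1 - ?e * a i)) ((1 - ?e * a i) * (1 - ?e * (\<Sum>i\<in>F. a i)))"
    using insert assms(1) by (intro qcong_mult_left) (auto intro!: p_integral_diff p_integral_mult)
  also have "qcong p (2 * k) ((1 - ?e * a i) * (1 - ?e * (\<Sum>i\<in>F. a i))) (1 - ?e * (a i + (\<Sum>i\<in>F. a i)))"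
  proof (rule qcongI)
    show "p_integral p (a i * (\<Sum>i\<in>F. a i))" using insert assms(1) by auto
    show "(1 - ?e * a i) * (1 - ?e * (\<Sum>i\<in>F. a i)) - (1 - ?e * (a i + (\<Sum>i\<in>F. a i))) =
        of_nat p ^ (2 * k) * (a i * (\<Sum>i\<in>F. a i))"
      by (simp add: algebra_simps power_mult_distrib flip: power_add mult_2)
  qed
  finally show ?case using insert assms(1) by simp
qed (auto simp: assms(1))

lemma inverse_prod_add_prime_power_cong:
  assumes p: "prime p" and "1 \<le> k" and x: "\<And>i. i \<in> I \<Longrightarrow> \<not> p dvd x i"
  shows "qcong p (2 * k) (1 / (\<Prod>i\<in>I. of_nat (x i + p ^ k * y i)))
           (1 / (\<Prod>i\<in>I. of_nat (x i)) * (1 - of_nat p ^ k * (\<Sum>i\<in>I. of_nat (y i) / of_nat (x i))))"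
proof -
  note qcong_trans[OF p, trans]
  have "qcong p (2 * k) (\<Prod>i\<in>I. 1 / of_nat (x i + p ^ k * y i))
      (\<Prod>i\<in>I. 1 / of_nat (x i) * (1 - of_nat p ^ k * (of_nat (y i) / of_nat (x i))))"
  proof (rule qcong_prod[OF p])
    fix i assume i: "i \<in> I"
    then show "qcong p (2 * k) (1 / of_nat (x i + p ^ k * y i))
        (1 / of_nat (x i) * (1 - of_nat p ^ k * (of_nat (y i) / of_nat (x i))))"
      using inverse_add_prime_power_cong[OF p \<open>1 \<le> k\<close> x] by simp
    have "\<not> p dvd x i + p ^ k * y i"
      using i x \<open>1 \<le> k\<close> by (simp add: dvd_add_left_iff dvd_mult2[OF dvd_power])
    then show "p_integral p (1 / of_nat (x i + p ^ k * y i))" by (rule p_integral_inverse_of_nat)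
    show "p_integral p (1 / of_nat (x i) * (1 - of_nat p ^ k * (of_nat (y i) / of_nat (x i))))"
      using i x p by (intro p_integral_mult p_integral_diff p_integral_power)
        (auto simp: p_integral_inverse_of_nat p_integral_of_nat_divide)
  qed
  also have "(\<Prod>i\<in>I. 1 / of_nat (x i) * (1 - of_nat p ^ k * (of_nat (y i) / of_nat (x i)))) =
      (1 :: rat) / (\<Prod>i\<in>I. of_nat (x i)) * (\<Prod>i\<in>I. 1 - of_nat p ^ k * (of_nat (y i) / of_nat (x i)))"
    by (simp add: prod.distrib prod_dividef)
  also have "qcong p (2 * k) \<dots>
      (1 / (\<Prod>i\<in>I. of_nat (x i)) * (1 - of_nat p ^ k * (\<Sum>i\<in>I. of_nat (y i) / of_nat (x i))))"
    using p x
    by (intro qcong_mult_left prod_one_minus_cong p_integral_inverse_prod)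
       (auto simp: p_integral_of_nat_divide)
  finally show ?thesis using p by (simp add: prod_dividef)
qed

lemma sum_digit_tuples_inverse_prod_cong:
  assumes p: "prime p" and "1 \<le> k" "n < p" and x: "\<And>i. i < n \<Longrightarrow> \<not> p dvd x i"
    and dvd_card: "p dvd card (digit_tuples p n t)"
  shows "qcong p (k + 1) (\<Sum>y\<in>digit_tuples p n t. 1 / (\<Prod>i<n. of_nat (x i + p ^ k * y i)))
           (of_nat (card (digit_tuples p n t)) / (\<Prod>i<n. of_nat (x i)))"
proof -
  let ?D = "digit_tuples p n t"
  let ?w = "1 / (\<Prod>i<n. of_nat (x i)) :: rat"
  let ?e = "of_nat p ^ k :: rat"
  note qcong_trans[OF p, trans]
  define c where "c i = (\<Sum>y\<in>?D. y i) div p" for i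
  have "p dvd (\<Sum>y\<in>?D. y i)" if "i < n" for i
  proof -
    have "p dvd n * (\<Sum>y\<in>?D. y i)" using sum_digit_tuples_coordinate[OF that] dvd_card by simp
    moreover have "\<not> p dvd n" using \<open>n < p\<close> that by (auto dest: dvd_imp_le)
    ultimately show ?thesis using p by (simp add: prime_dvd_mult_iff)
  qed
  then have c: "(\<Sum>y\<in>?D. y i) = p * c i" if "i < n" for i using that by (simp add: c_def)
  have swap: "(\<Sum>y\<in>?D. \<Sum>i<n. of_nat (y i) / of_nat (x i)) =
      of_nat p * (\<Sum>i<n. of_nat (c i) / of_nat (x i) :: rat)"
  proof -
    have "(\<Sum>y\<in>?D. \<Sum>i<n. of_nat (y i) / of_nat (x i)) =
        (\<Sum>i<n. of_nat (\<Sum>y\<in>?D. y i) / of_nat (x i) :: rat)"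
      by (subst sum.swap) (simp add: sum_divide_distrib)
    also have "\<dots> = of_nat p * (\<Sum>i<n. of_nat (c i) / of_nat (x i))"
      by (simp add: c sum_distrib_left)
    finally show ?thesis .
  qed
  have "qcong p (k + 1) (\<Sum>y\<in>?D. 1 / (\<Prod>i<n. of_nat (x i + p ^ k * y i)))
      (\<Sum>y\<in>?D. ?w * (1 - ?e * (\<Sum>i<n. of_nat (y i) / of_nat (x i))))"
    using \<open>1 \<le> k\<close> x
    by (intro qcong_sum[OF p] qcong_mono[OF p inverse_prod_add_prime_power_cong[OF p]]) auto
  also have "(\<Sum>y\<in>?D. ?w * (1 - ?e * (\<Sum>i<n. of_nat (y i) / of_nat (x i)))) =
      of_nat (card ?D) * ?w - ?e * ?w * (\<Sum>y\<in>?D. \<Sum>i<n. of_nat (y i) / of_nat (x i))"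
  proof -
    have "?w * (1 - ?e * a) = ?w - ?e * ?w * a" for a by (simp add: right_diff_distrib)
    then show ?thesis by (simp only: sum_subtractf sum_distrib_left[symmetric]) simp
  qed
  also have "\<dots> = of_nat (card ?D) * ?w - of_nat p ^ (k + 1) * (?w * (\<Sum>i<n. of_nat (c i) / of_nat (x i)))"
    unfolding swap by (simp add: mult_ac)
  also have "qcong p (k + 1) \<dots> (of_nat (card ?D) / (\<Prod>i<n. of_nat (x i)))"
  proof (rule qcongI)
    show "p_integral p (- (?w * (\<Sum>i<n. of_nat (c i) / of_nat (x i))))"
      using p x by (intro p_integral_uminus p_integral_mult p_integral_sum p_integral_inverse_prod)
        (auto simp: p_integral_of_nat_divide)
  qed simp
  finally show ?thesis .
qed

section \<open>Splitting off the top digit\<close>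

lemma finite_S_tuples [simp]: "finite (S_tuples p n m r)"
  unfolding S_tuples_def
  by (rule finite_subset[of _ "{0..<n} \<rightarrow>\<^sub>E {0..<p ^ r}"]) (auto intro: finite_PiE)

lemma sum_restrict_lessThan: "(\<Sum>i<(n::nat). restrict f {0..<n} i) = (\<Sum>i<n. f i)"
  by (rule sum.cong) (auto simp: restrict_def)

lemma join_digits_mem_S_tuples:
  assumes "1 \<le> k" "1 \<le> m" "n < p" "j < n"
    and x: "x \<in> S_tuples p n j k" and y: "y \<in> digit_tuples p n (int m * int p - int j)"
  shows "restrict (\<lambda>i. x i + p ^ k * y i) {0..<n} \<in> S_tuples p n m (k + 1)"
proof -
  have x_i: "0 < x i \<and> x i < p ^ k \<and> \<not> p dvd x i" and y_i: "y i < p" if "i < n" for i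
    using x y that by (auto simp: S_tuples_def digit_tuples_def PiE_def Pi_def)
  have bound: "x i + p ^ k * y i < p ^ (k + 1)" if "i < n" for i
  proof -
    have "x i + p ^ k * y i < p ^ k * (y i + 1)" using x_i[OF that] by simp
    also have "\<dots> \<le> p ^ k * p" using y_i[OF that] by (intro mult_left_mono) auto
    finally show ?thesis by (simp add: mult.commute)
  qed
  have coprime: "\<not> p dvd x i + p ^ k * y i" if "i < n" for i
    using x_i[OF that] \<open>1 \<le> k\<close> by (simp add: dvd_add_left_iff dvd_mult2[OF dvd_power])
  have "p \<le> m * p" using \<open>1 \<le> m\<close> by simp
  then have "j \<le> m * p" using assms(3,4) by linarith
  moreover have "int (\<Sum>i<n. y i) = int m * int p - int j" using y by (simp add: digit_tuples_def)
  ultimately have "int (\<Sum>i<n. y i) = int (m * p - j)" by (simp add: of_nat_diff)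
  then have "(\<Sum>i<n. y i) = m * p - j" by (simp only: of_nat_eq_iff)
  then have "(\<Sum>i<n. x i + p ^ k * y i) = p ^ k * (j + (m * p - j))"
    using x by (simp add: S_tuples_def sum.distrib add_mult_distrib2 flip: sum_distrib_left)
  also have "\<dots> = m * p ^ (k + 1)" using \<open>j \<le> m * p\<close> by (simp add: mult_ac)
  finally show ?thesis
    using x_i bound coprime by (simp add: S_tuples_def restrict_PiE_iff sum_restrict_lessThan)
qed

lemma split_digits_mem:
  fixes n :: nat
  assumes "prime p" "1 \<le> k" "1 \<le> n" and l: "l \<in> S_tuples p n m (k + 1)"
  defines "j \<equiv> (\<Sum>i<n. l i mod p ^ k) div p ^ k"
  shows "j \<in> {1..<n}" and "restrict (\<lambda>i. l i mod p ^ k) {0..<n} \<in> S_tuples p n j k"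
    and "restrict (\<lambda>i. l i div p ^ k) {0..<n} \<in> digit_tuples p n (int m * int p - int j)"
proof -
  let ?e = "p ^ k"
  have "0 < ?e" using assms(1) by (simp add: prime_gt_0_nat)
  have l_i: "l i < ?e * p \<and> \<not> p dvd l i" if "i < n" for i
    using l that by (auto simp: S_tuples_def PiE_def Pi_def mult.commute)
  have low: "0 < l i mod ?e \<and> l i mod ?e < ?e \<and> \<not> p dvd l i mod ?e" if "i < n" for i
  proof -
    have "p dvd ?e" using \<open>1 \<le> k\<close> by (simp add: dvd_power)
    then have "\<not> p dvd l i mod ?e" using l_i[OF that] dvd_mod_iff by blast
    then show ?thesis using \<open>0 < ?e\<close> by (auto intro: gr0I)
  qed
  have high: "l i div ?e < p" if "i < n" for i
    using l_i[OF that] by (intro less_mult_imp_div_less) (simp add: mult.commute)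
  define X where "X = (\<Sum>i<n. l i mod ?e)"
  define Y where "Y = (\<Sum>i<n. l i div ?e)"
  have "X + ?e * Y = (\<Sum>i<n. l i)"
    unfolding X_def Y_def by (simp add: sum_distrib_left flip: sum.distrib)
  also have "\<dots> = m * p * ?e" using l by (simp add: S_tuples_def mult_ac)
  finally have XY: "X + ?e * Y = m * p * ?e" .
  then have "?e dvd X" by (metis dvd_add_left_iff dvd_triv_left dvd_triv_right)
  then have X: "X = j * ?e" unfolding j_def X_def[symmetric] by simp
  have "0 < X" unfolding X_def
    using low[of 0] \<open>1 \<le> n\<close> member_le_sum[of 0 "{..<n}" "\<lambda>i. l i mod ?e"] by auto
  moreover have "X < n * ?e" unfolding X_def
    using sum_strict_mono[of "{..<n}" "\<lambda>i. l i mod ?e" "\<lambda>_. ?e"] low \<open>1 \<le> n\<close>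
    by (auto simp: lessThan_empty_iff)
  ultimately show "j \<in> {1..<n}" using X by (auto simp: Suc_le_eq)
  show "restrict (\<lambda>i. l i mod ?e) {0..<n} \<in> S_tuples p n j k"
    using low X by (simp add: S_tuples_def X_def restrict_PiE_iff sum_restrict_lessThan)
  have "(j + Y) * ?e = (m * p) * ?e" using XY X by (simp add: algebra_simps)
  then have "j + Y = m * p" using \<open>0 < ?e\<close> by (metis mult_right_cancel not_less0)
  then have "int j + int Y = int m * int p" using arg_cong[of _ _ int] by fastforce
  then have "int Y = int m * int p - int j" by linarith
  then show "restrict (\<lambda>i. l i div ?e) {0..<n} \<in> digit_tuples p n (int m * int p - int j)"
    using high by (simp add: digit_tuples_def Y_def restrict_PiE_iff sum_restrict_lessThan)
qed

lemma S_split: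
  assumes "prime p" "1 \<le> k" "1 \<le> n" "n < p" "1 \<le> m"
  shows "S p n m (k + 1) = (\<Sum>j\<in>{1..<n}. \<Sum>x\<in>S_tuples p n j k.
           \<Sum>y\<in>digit_tuples p n (int m * int p - int j). 1 / (\<Prod>i<n. of_nat (x i + p ^ k * y i)))"
proof -
  let ?e = "p ^ k"
  have "0 < ?e" using assms(1) by (simp add: prime_gt_0_nat)
  let ?D = "SIGMA j:{1..<n}. S_tuples p n j k \<times> digit_tuples p n (int m * int p - int j)"
  let ?join = "\<lambda>(j, x, y). restrict (\<lambda>i. x i + ?e * y i) {0..<n}"
  let ?split = "\<lambda>l. ((\<Sum>i<n. l i mod ?e) div ?e,
      restrict (\<lambda>i. l i mod ?e) {0..<n}, restrict (\<lambda>i. l i div ?e) {0..<n})"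
  have "bij_betw ?join ?D (S_tuples p n m (k + 1))"
  proof (rule bij_betw_byWitness[where f'="?split"])
    show "\<forall>z\<in>?D. ?split (?join z) = z"
    proof
      fix z assume "z \<in> ?D"
      then obtain j x y where z: "z = (j, x, y)" and x: "x \<in> S_tuples p n j k"
        and y: "y \<in> digit_tuples p n (int m * int p - int j)" by auto
      have x_lt: "x i < ?e" if "i < n" for i using x that by (auto simp: S_tuples_def PiE_def Pi_def)
      have "(\<Sum>i<n. restrict (\<lambda>i. x i + ?e * y i) {0..<n} i mod ?e) = j * ?e"
        using x x_lt by (simp add: S_tuples_def sum_restrict_lessThan)
      moreover have "restrict (\<lambda>i. restrict (\<lambda>i. x i + ?e * y i) {0..<n} i mod ?e) {0..<n} = x"
        using x x_lt by (auto simp: S_tuples_def PiE_def extensional_def restrict_def)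
      moreover have "restrict (\<lambda>i. restrict (\<lambda>i. x i + ?e * y i) {0..<n} i div ?e) {0..<n} = y"
        using y x_lt \<open>0 < ?e\<close> by (auto simp: digit_tuples_def PiE_def extensional_def restrict_def)
      ultimately show "?split (?join z) = z" using z \<open>0 < ?e\<close> by simp
    qed
    show "\<forall>l\<in>S_tuples p n m (k + 1). ?join (?split l) = l"
      by (auto simp: S_tuples_def PiE_def extensional_def restrict_def)
    show "?join ` ?D \<subseteq> S_tuples p n m (k + 1)"
      using join_digits_mem_S_tuples[OF assms(2,5,4)] by auto
    show "?split ` S_tuples p n m (k + 1) \<subseteq> ?D"
      using split_digits_mem[OF assms(1-3)] by auto
  qed
  then have "S p n m (k + 1) = (\<Sum>(j, x, y)\<in>?D. 1 / (\<Prod>i<n. of_nat (?join (j, x, y) i)))"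
    unfolding S_def by (simp add: sum.reindex_bij_betw[symmetric] case_prod_unfold)
  also have "\<dots> = (\<Sum>(j, x, y)\<in>?D. 1 / (\<Prod>i<n. of_nat (x i + ?e * y i)))"
    by (intro sum.cong refl) (auto intro!: prod.cong)
  finally show ?thesis by (simp add: sum.Sigma sum.cartesian_product)
qed

section \<open>The recurrence in \<open>r\<close>\<close>

lemma p_integral_S: "prime p \<Longrightarrow> p_integral p (S p n m r)"
  unfolding S_def
  by (intro p_integral_sum p_integral_inverse_prod) (auto simp: S_tuples_def PiE_def Pi_def)

context
  fixes p n :: nat
  assumes p: "prime p" and n: "2 \<le> n" "n < p"
begin

lemma S_recurrence:
  assumes "1 \<le> k" "1 \<le> m"
  shows "qcong p (k + 1) (S p n m (k + 1))
           (\<Sum>j\<in>{1..<n}. of_int (high_digit_count p n m j) * S p n j k)"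
proof -
  have summand: "qcong p (k + 1) (\<Sum>x\<in>S_tuples p n j k. \<Sum>y\<in>digit_tuples p n (int m * int p - int j).
      1 / (\<Prod>i<n. of_nat (x i + p ^ k * y i))) (of_int (high_digit_count p n m j) * S p n j k)"
    if j: "j \<in> {1..<n}" for j
  proof -
    let ?D = "digit_tuples p n (int m * int p - int j)"
    have "p dvd card ?D"
      using high_digit_count_dvd[OF p n assms(2) j] by (simp add: high_digit_count_def)
    then have "qcong p (k + 1) (\<Sum>x\<in>S_tuples p n j k. \<Sum>y\<in>?D. 1 / (\<Prod>i<n. of_nat (x i + p ^ k * y i)))
        (\<Sum>x\<in>S_tuples p n j k. of_nat (card ?D) / (\<Prod>i<n. of_nat (x i)))"
      using assms(1) n(2)
      by (intro qcong_sum[OF p] sum_digit_tuples_inverse_prod_cong[OF p]) (auto simp: S_tuples_def)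
    also have "(\<Sum>x\<in>S_tuples p n j k. of_nat (card ?D) / (\<Prod>i<n. of_nat (x i))) =
        of_int (high_digit_count p n m j) * S p n j k"
      by (simp add: S_def high_digit_count_def sum_distrib_left)
    finally show ?thesis .
  qed
  have split: "S p n m (k + 1) = (\<Sum>j\<in>{1..<n}. \<Sum>x\<in>S_tuples p n j k.
      \<Sum>y\<in>digit_tuples p n (int m * int p - int j). 1 / (\<Prod>i<n. of_nat (x i + p ^ k * y i)))"
    using n by (intro S_split[OF p assms(1) _ n(2) assms(2)]) simp
  show ?thesis unfolding split by (rule qcong_sum[OF p summand])
qed

lemma S_recurrence_2:
  assumes "1 \<le> m"
  shows "qcong p 2 (S p n m 2) (\<Sum>j\<in>{1..<n}. of_int (high_digit_count p n m j) * S p n j 1)"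
  using S_recurrence[OF order_refl assms] unfolding one_add_one .

lemma S_1_2_cong_0: "qcong p 1 (S p n 1 2) 0"
proof -
  note qcong_trans[OF p, trans]
  have "qcong p 1 (S p n 1 2) (\<Sum>j\<in>{1..<n}. of_int (high_digit_count p n 1 j) * S p n j 1)"
    using qcong_mono[OF p S_recurrence_2, of 1] by simp
  also have "qcong p 1 \<dots> (\<Sum>j\<in>{1..<n}. 0)"
  proof (intro qcong_sum[OF p])
    fix j assume "j \<in> {1..<n}"
    then have "[high_digit_count p n 1 j = 0] (mod int p ^ 1)"
      using high_digit_count_dvd[OF p n] by (simp add: cong_0_iff)
    from qcong_mult_left[OF p qcong_of_int[OF p this] p_integral_S[OF p, of n j 1]]
    show "qcong p 1 (of_int (high_digit_count p n 1 j) * S p n j 1) 0" by (simp add: mult.commute)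
  qed
  finally show ?thesis by simp
qed

lemma S_2_cong:
  assumes "1 \<le> m"
  shows "qcong p 2 (S p n m 2) (of_int (sign_binom n m) * S p n 1 2)"
proof -
  note qcong_trans[OF p, trans]
  have "qcong p 2 (S p n m 2) (\<Sum>j\<in>{1..<n}. of_int (high_digit_count p n m j) * S p n j 1)"
    using S_recurrence_2[OF assms] .
  also have "qcong p 2 \<dots>
      (\<Sum>j\<in>{1..<n}. of_int (sign_binom n m) * (of_int (high_digit_count p n 1 j) * S p n j 1))"
  proof (intro qcong_sum[OF p])
    fix j assume "j \<in> {1..<n}"
    from qcong_of_int[OF p high_digit_count_cong_sign_binom[OF p n assms this]]
    have "qcong p 2 (S p n j 1 * of_int (high_digit_count p n m j))
        (S p n j 1 * of_int (sign_binom n m * high_digit_count p n 1 j))"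
      by (rule qcong_mult_left[OF p _ p_integral_S[OF p]])
    then show "qcong p 2 (of_int (high_digit_count p n m j) * S p n j 1)
        (of_int (sign_binom n m) * (of_int (high_digit_count p n 1 j) * S p n j 1))"
      by (simp add: mult_ac)
  qed
  also have "\<dots> = of_int (sign_binom n m) * (\<Sum>j\<in>{1..<n}. of_int (high_digit_count p n 1 j) * S p n j 1)"
    by (simp add: sum_distrib_left)
  also have "qcong p 2 \<dots> (of_int (sign_binom n m) * S p n 1 2)"
    using qcong_mult_left[OF p qcong_sym[OF S_recurrence_2[OF order_refl]] p_integral_of_int[OF p]]
    by simp
  finally show ?thesis .
qed

lemma S_cong_step:
  assumes "2 \<le> R" "1 \<le> m"
    and IH: "\<And>j. j \<in> {1..<n} \<Longrightarrow>
      qcong p R (S p n j R) (of_int (sign_binom n j) * S p n 1 2 * of_nat p ^ (R - 2))"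
  shows "qcong p (R + 1) (S p n m (R + 1)) (of_int (sign_binom n m) * S p n 1 2 * of_nat p ^ (R - 1))"
proof -
  note qcong_trans[OF p, trans]
  obtain Q where Q: "p_integral p Q" "S p n 1 2 = of_nat p * Q"
    using S_1_2_cong_0 by (auto elim: qcongE)
  have "qcong p (R + 1) (S p n m (R + 1)) (\<Sum>j\<in>{1..<n}. of_int (high_digit_count p n m j) * S p n j R)"
    using assms(1,2) by (intro S_recurrence) auto
  also have "qcong p (R + 1) \<dots> (\<Sum>j\<in>{1..<n}. of_int (high_digit_count p n m j) *
      (of_int (sign_binom n j) * S p n 1 2 * of_nat p ^ (R - 2)))"
    using high_digit_count_dvd[OF p n assms(2)] IH
    by (intro qcong_sum[OF p] qcong_mult_of_int_multiple[OF p]) auto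
  also have "\<dots> = of_nat p ^ (R - 1) * (Q * of_int (\<Sum>j\<in>{1..<n}. high_digit_count p n m j * sign_binom n j))"
  proof -
    have "R - 1 = Suc (R - 2)" using assms(1) by simp
    then have "(of_nat p :: rat) * of_nat p ^ (R - 2) = of_nat p ^ (R - 1)" by simp
    then have "of_int (high_digit_count p n m j) * (of_int (sign_binom n j) * S p n 1 2 * of_nat p ^ (R - 2)) =
        of_nat p ^ (R - 1) * (Q * of_int (high_digit_count p n m j * sign_binom n j))" for j
      unfolding Q(2) by (simp add: mult_ac)
    then show ?thesis by (simp only: sum_distrib_left of_int_sum)
  qed
  also have "qcong p (R + 1) \<dots> (of_nat p ^ (R - 1) * (Q * of_int (int p * sign_binom n m)))"
  proof -
    have "qcong p 2 (Q * of_int (\<Sum>j\<in>{1..<n}. high_digit_count p n m j * sign_binom n j))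
        (Q * of_int (int p * sign_binom n m))"
      using sum_high_digit_count_sign_binom[OF p n assms(2)] Q(1) p
      by (intro qcong_mult_left qcong_of_int)
    from qcong_mult_prime_power[OF this, of "R - 1"] show ?thesis
      using assms(1) by (simp add: add.commute)
  qed
  also have "\<dots> = of_int (sign_binom n m) * S p n 1 2 * of_nat p ^ (R - 1)"
    unfolding Q(2) using assms(1) by (simp add: mult_ac)
  finally show ?thesis using assms(1) by simp
qed

end

theorem lemma2p2:
  fixes m n r p :: nat
  assumes "0 < m" and "0 < r" and "2 \<le> n"
    and "prime p" and "p > n + 1" and "\<not> p dvd m"
  shows "qcong p (r + 1) (S p n m (r + 1))
           ((-1) ^ (m - 1) * of_nat ((n - 2) choose (m - 1)) * S p n 1 2 * of_nat p ^ (r - 1))"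
proof -
  have p: "prime p" and n: "2 \<le> n" "n < p" using assms by auto
  have "\<forall>m \<ge> 1. qcong p R (S p n m R) (of_int (sign_binom n m) * S p n 1 2 * of_nat p ^ (R - 2))"
    if "2 \<le> R" for R
    using that
  proof (induction R rule: nat_induct_at_least)
    case base
    then show ?case using S_2_cong[OF p n] by simp
  next
    case (Suc R)
    then show ?case using S_cong_step[OF p n] by (simp add: Suc_diff_Suc)
  qed
  from this[of "r + 1"] have "qcong p (r + 1) (S p n m (r + 1))
      (of_int (sign_binom n m) * S p n 1 2 * of_nat p ^ (r + 1 - 2))"
    using assms(1,2) by simp
  then show ?thesis by (simp add: sign_binom_def)
qed

end
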